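(* For a nonempty finite subset $E\subseteq\mathbb{N}$ the following are equivalent: (1) $\mathcal{F}_E=\mathcal{F}_\infty$; (2) $A_E=\{2\}$. Moreover, if $|E|=2$, then (1) and (2) are equivalent to (3): $E=\{2^n,2^{n+1}\}$ for some integer $n\ge0$.
   Context: $\mathbb{N}=\{1,2,\dots\}$, $\mathbb{N}_0=\{0\}\cup\mathbb{N}$, $\Pi$ the set of primes. The Kirch topology $\tau_K$ on $\mathbb{N}$ is generated by the base of all $a+b\mathbb{N}_0=\{a+bn:n\in\mathbb{N}_0\}$ with $a,b\in\mathbb{N}$ coprime and $b$ square-free. Closures $\overline{U}$ are in $\tau_K$; $\tau_x=\{U\in\tau_K:x\in U\}$. For finite $E\subseteq\mathbb{N}$, $\mathcal{F}_E=\{B\subseteq\mathbb{N}:\exists (U_x)_{x\in E}\in\prod_{x\in E}\tau_x\ (\bigcap_{x\in E}\overline{U_x}\subseteq B)\}$, and $\mathcal{F}_\infty=\{B\subseteq\mathbb{N}:\exists n\in\mathbb{N}\ \exists U_1,\dots,U_n\in\tau_K\setminus\{\emptyset\}\ (\overline{U_1}\cap\dots\cap\overline{U_n}\subseteq B)\}$. For nonempty finite $E$, $A_E=\{p\in\Pi:\exists k\in\mathbb{N}\ (E\subseteq p\mathbb{Z}\cup(k+p\mathbb{Z}))\}$. *)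

theory Defs
  imports "HOL-Analysis.Analysis" "HOL-Computational_Algebra.Squarefree" "HOL-Number_Theory.Number_Theory"
begin

text \<open>Natural numbers N = {1,2,...} are represented as positive elements of type nat.
  Base of the Kirch topology: arithmetic progressions a + b N_0 with a, b >= 1,
  gcd(a,b) = 1 and b squarefree.\<close>
definition kirch_base :: "nat set set" where
  "kirch_base = {{a + b * n | n. True} | a b. a > 0 \<and> b > 0 \<and> coprime a b \<and> squarefree b}"

definition kirch :: "nat topology" where
  "kirch = topology_generated_by kirch_base"

definition tau :: "nat \<Rightarrow> nat set set" where
  "tau x = {U. openin kirch U \<and> x \<in> U}"

definition F_E :: "nat set \<Rightarrow> nat set set" where
  "F_E E = {B. B \<subseteq> {0<..} \<and>
     (\<exists>U :: nat \<Rightarrow> nat set. (\<forall>x\<in>E. U x \<in> tau x) \<and> (\<Inter>x\<in>E. kirch closure_of (U x)) \<subseteq> B)}"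

definition F_inf :: "nat set set" where
  "F_inf = {B. B \<subseteq> {0<..} \<and>
     (\<exists>n::nat. n \<ge> 1 \<and> (\<exists>U :: nat \<Rightarrow> nat set.
        (\<forall>i\<in>{1..n}. openin kirch (U i) \<and> U i \<noteq> {}) \<and>
        (\<Inter>i\<in>{1..n}. kirch closure_of (U i)) \<subseteq> B))}"

definition A_E :: "nat set \<Rightarrow> nat set" where
  "A_E E = {p. prime p \<and> (\<exists>k::nat. k > 0 \<and>
     (\<forall>x\<in>E. (int p dvd int x) \<or> [int x = int k] (mod int p)))}"

end

theory Submission
  imports Defs
begin

(* The basic neighbourhoods of y are the progressions y + d N_0 with d squarefree and coprime
  to y, so by the Chinese remainder theorem y lies in the closure of a + b N_0 iff y > 0 and
  y = a (mod p) for every prime p dividing b but not y.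

  Consequently the closure of a nonempty open set contains all common multiples of finitely
  many odd primes (a factor 2 of the modulus is harmless, as y is then odd), and so does every
  member of F_inf. If A_E = {2}, then for every odd prime p and every y not divisible by p
  some x in E is neither divisible by p nor congruent to y mod p; hence the closures of the
  neighbourhoods x + p N_0 (x in E, p not dividing x) meet only in multiples of p, and F_inf
  is contained in F_E. If A_E contains an odd prime p,
  with residue k, then p N belongs to F_inf, since the closures of 1 + p N_0 and 2 + p N_0
  meet only in multiples of p; but it does not belong to F_E: a number congruent to k mod p
  and divisible by all other prime factors of the chosen moduli lies in every closure.

  For E = {x, y}, A_E = {2} means that x, y and x - y have no odd prime factor, which forces
  E = {2^n, 2^(n+1)}. *)

definition AP :: "nat \<Rightarrow> nat \<Rightarrow> nat set" where
  "AP a b = {a + b * n | n. True}"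

lemma mem_AP: "z \<in> AP a b \<longleftrightarrow> a \<le> z \<and> [z = a] (mod b)"
proof
  assume "z \<in> AP a b"
  then show "a \<le> z \<and> [z = a] (mod b)" by (auto simp: AP_def cong_def)
next
  assume "a \<le> z \<and> [z = a] (mod b)"
  then obtain n where "z = a + b * n"
    by (metis cong_altdef_nat dvdE le_add_diff_inverse)
  then show "z \<in> AP a b" by (auto simp: AP_def)
qed

lemma kirch_base_eq:
  "kirch_base = {AP a b | a b. 0 < a \<and> 0 < b \<and> coprime a b \<and> squarefree b}"
  unfolding kirch_base_def AP_def by simp

lemma openin_kirch_AP:
  "0 < a \<Longrightarrow> 0 < b \<Longrightarrow> coprime a b \<Longrightarrow> squarefree b \<Longrightarrow> openin kirch (AP a b)"
  unfolding kirch_def openin_topology_generated_by_iff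
  by (rule generate_topology_on.Basis) (auto simp: kirch_base_eq)

lemma openin_kirch_AP_prime:
  assumes "0 < x" "prime p" "\<not> p dvd x"
  shows "openin kirch (AP x p)"
proof -
  have "coprime x p"
    using prime_imp_coprime[OF assms(2,3)] by (rule coprime_commute[THEN iffD1])
  with assms(1,2) show ?thesis
    by (intro openin_kirch_AP) (simp_all add: prime_gt_0_nat squarefree_prime)
qed

lemma topspace_kirch: "topspace kirch = {0<..}"
proof -
  have "AP z 1 \<in> kirch_base" if "0 < z" for z
    using that unfolding kirch_base_eq by (intro CollectI exI[of _ z] exI[of _ 1]) simp
  moreover have "z \<in> AP z 1" for z
    by (simp add: mem_AP)
  moreover have "\<Union>kirch_base \<subseteq> {0<..}"
    by (auto simp: kirch_base_def)
  ultimately have "\<Union>kirch_base = {0<..}"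
    by blast
  then show ?thesis by (simp add: kirch_def)
qed

lemma AP_subset:
  assumes "y \<in> AP a b" "b dvd d"
  shows "AP y d \<subseteq> AP a b"
proof
  fix z assume "z \<in> AP y d"
  with assms show "z \<in> AP a b"
    unfolding mem_AP by (meson cong_dvd_modulus_nat cong_trans le_trans)
qed

lemma squarefree_lcm_nat:
  fixes a b :: nat
  assumes "squarefree a" "squarefree b"
  shows "squarefree (lcm a b)"
proof -
  have "a \<noteq> 0" "b \<noteq> 0" using assms by (metis not_squarefree_0)+
  then show ?thesis
    using assms by (simp add: squarefree_factorial_semiring'' multiplicity_lcm)
qed

lemma openin_kirch_contains_AP:
  assumes "openin kirch V" "y \<in> V"
  obtains d where "0 < d" "coprime y d" "squarefree d" "AP y d \<subseteq> V"
proof -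
  have "generate_topology_on kirch_base V"
    using assms(1) by (simp add: kirch_def openin_topology_generated_by_iff)
  then have "\<exists>d>0. coprime y d \<and> squarefree d \<and> AP y d \<subseteq> V"
    using assms(2)
  proof (induction arbitrary: y)
    case Empty
    then show ?case by simp
  next
    case (Int V1 V2)
    then obtain d1 d2 where d: "0 < d1" "coprime y d1" "squarefree d1" "AP y d1 \<subseteq> V1"
      "0 < d2" "coprime y d2" "squarefree d2" "AP y d2 \<subseteq> V2"
      by blast
    have "AP y (lcm d1 d2) \<subseteq> AP y d1" "AP y (lcm d1 d2) \<subseteq> AP y d2"
      by (rule AP_subset; simp add: mem_AP)+
    moreover have "coprime y (lcm d1 d2)"
    proof (rule coprime_divisors[OF dvd_refl])
      show "lcm d1 d2 dvd d1 * d2" by (rule lcm_least) simp_all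
      show "coprime y (d1 * d2)" using d by simp
    qed
    ultimately show ?case using d
      by (intro exI[of _ "lcm d1 d2"]) (auto simp: squarefree_lcm_nat lcm_pos_nat)
  next
    case (UN K)
    then obtain W where "W \<in> K" "y \<in> W" by blast
    with UN obtain d where "0 < d" "coprime y d" "squarefree d" "AP y d \<subseteq> W" by blast
    with \<open>W \<in> K\<close> show ?case by blast
  next
    case (Basis V)
    then obtain a b where V: "V = AP a b" "0 < b" "coprime a b" "squarefree b"
      by (auto simp: kirch_base_eq)
    have "[y = a] (mod b)"
      using Basis.prems V by (simp add: mem_AP)
    then have "coprime y b"
      using V by (metis cong_imp_coprime cong_sym)
    moreover have "AP y b \<subseteq> V"
      using AP_subset Basis.prems V by simp
    ultimately show ?case using V by blast
  qed
  with that show thesis by blast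
qed

lemma squarefree_dvdI:
  fixes g n :: "'a :: factorial_semiring"
  assumes "squarefree g" "\<And>p. prime p \<Longrightarrow> p dvd g \<Longrightarrow> p dvd n"
  shows "g dvd n"
proof (cases "n = 0")
  case False
  have "g \<noteq> 0" using assms(1) by (metis not_squarefree_0)
  moreover have "multiplicity p g \<le> multiplicity p n" if "prime p" for p
  proof (cases "p dvd g")
    case True
    then have "0 < multiplicity p n"
      using assms(2) that False by (simp add: multiplicity_gt_zero_iff)
    moreover have "multiplicity p g \<le> 1"
      using assms(1) \<open>g \<noteq> 0\<close> that by (simp add: squarefree_factorial_semiring'')
    ultimately show ?thesis by linarith
  qed (simp add: not_dvd_imp_multiplicity_0)
  ultimately show ?thesis by (rule multiplicity_le_imp_dvd)
qed simp

lemma cong_mod_squarefreeI: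
  fixes g x y :: nat
  assumes "squarefree g" "\<And>p. prime p \<Longrightarrow> p dvd g \<Longrightarrow> [x = y] (mod p)"
  shows "[x = y] (mod g)"
proof -
  have ordered: "[u = v] (mod g)"
    if "v \<le> u" "\<And>p. prime p \<Longrightarrow> p dvd g \<Longrightarrow> [u = v] (mod p)" for u v :: nat
    using that assms(1) by (simp add: cong_altdef_nat squarefree_dvdI)
  show ?thesis
  proof (cases "y \<le> x")
    case True
    then show ?thesis using ordered assms(2) by blast
  next
    case False
    then have "[y = x] (mod g)"
      by (intro ordered) (use False in simp, metis assms(2) cong_sym)
    then show ?thesis by (rule cong_sym)
  qed
qed

lemma AP_Int_AP_nonempty:
  assumes "0 < b" "0 < d" "[y = a] (mod gcd b d)"
  obtains z where "z \<in> AP a b" "z \<in> AP y d"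
proof -
  have "[int y = int a] (mod int (gcd b d))"
    using assms(3) by (simp only: cong_int_iff)
  then have "gcd (int b) (int d) dvd int y - int a"
    by (simp add: cong_iff_dvd_diff)
  then obtain t where t: "[int b * t = int y - int a] (mod int d)"
    using cong_solve_dvd_int by blast
  \<comment> \<open>the summand d * y only serves to make a + b * s exceed y\<close>
  define s where "s = nat (t mod int d) + d * y"
  have "int s = t mod int d + int d * int y"
    using assms(2) by (simp add: s_def)
  then have "[int s = t] (mod int d)"
    by (simp add: cong_def)
  then have "[int b * int s = int b * t] (mod int d)"
    by (rule cong_scalar_left)
  then have "[int b * int s = int y - int a] (mod int d)"
    using t by (rule cong_trans)
  then have "[int (a + b * s) = int y] (mod int d)"
    by (simp add: cong_iff_dvd_diff algebra_simps)
  then have "[a + b * s = y] (mod d)"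
    by (simp only: cong_int_iff)
  moreover have "y \<le> a + b * s"
  proof -
    have "y \<le> d * y" using assms(2) by simp
    also have "\<dots> \<le> s" by (simp add: s_def)
    also have "\<dots> \<le> b * s" using assms(1) by simp
    finally show ?thesis by simp
  qed
  ultimately have "a + b * s \<in> AP y d"
    by (simp add: mem_AP)
  moreover have "a + b * s \<in> AP a b"
    by (auto simp: AP_def)
  ultimately show thesis by (rule that[rotated])
qed

lemma cong_if_in_closure_of_AP:
  assumes "y \<in> kirch closure_of AP a b" "prime p" "p dvd b" "\<not> p dvd y"
  shows "[y = a] (mod p)"
proof -
  have "y \<in> topspace kirch"
    using assms(1) by (simp add: in_closure_of)
  then have "openin kirch (AP y p)"
    using assms(2,4) by (intro openin_kirch_AP_prime) (simp_all add: topspace_kirch)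
  moreover have "y \<in> AP y p"
    by (simp add: mem_AP)
  ultimately obtain z where "z \<in> AP a b" "z \<in> AP y p"
    using assms(1) unfolding in_closure_of by blast
  then have "[z = a] (mod p)" "[z = y] (mod p)"
    using cong_dvd_modulus_nat[OF _ assms(3)] by (simp_all add: mem_AP)
  then show ?thesis
    by (metis cong_sym cong_trans)
qed

lemma in_closure_of_API:
  assumes "0 < b" "squarefree b" "0 < y"
    and "\<And>p. prime p \<Longrightarrow> p dvd b \<Longrightarrow> \<not> p dvd y \<Longrightarrow> [y = a] (mod p)"
  shows "y \<in> kirch closure_of AP a b"
  unfolding in_closure_of topspace_kirch
proof (intro conjI allI impI)
  show "y \<in> {0<..}" using assms(3) by simp
  fix T assume "y \<in> T \<and> openin kirch T"
  then obtain d where d: "0 < d" "coprime y d" "AP y d \<subseteq> T"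
    by (metis openin_kirch_contains_AP)
  have "[y = a] (mod p)" if p: "prime p" "p dvd gcd b d" for p
  proof -
    have "p dvd b" "p dvd d" using p(2) by simp_all
    moreover have "\<not> p dvd y"
      by (meson coprime_common_divisor[OF d(2)] \<open>p dvd d\<close> p(1) not_prime_unit)
    ultimately show ?thesis using assms(4)[OF p(1)] by simp
  qed
  then have "[y = a] (mod gcd b d)"
    by (rule cong_mod_squarefreeI[OF squarefree_mono[OF gcd_dvd1 assms(2)]])
  then obtain z where "z \<in> AP a b" "z \<in> AP y d"
    using AP_Int_AP_nonempty assms(1) d(1) by blast
  with d(3) show "\<exists>z. z \<in> AP a b \<and> z \<in> T" by blast
qed

lemma in_closure_of_AP_iff:
  assumes "0 < b" "squarefree b"
  shows "y \<in> kirch closure_of AP a b \<longleftrightarrow>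
    0 < y \<and> (\<forall>p. prime p \<longrightarrow> p dvd b \<longrightarrow> \<not> p dvd y \<longrightarrow> [y = a] (mod p))"
proof
  assume y: "y \<in> kirch closure_of AP a b"
  then have "y \<in> topspace kirch"
    by (simp add: in_closure_of)
  with y show "0 < y \<and> (\<forall>p. prime p \<longrightarrow> p dvd b \<longrightarrow> \<not> p dvd y \<longrightarrow> [y = a] (mod p))"
    using cong_if_in_closure_of_AP by (simp add: topspace_kirch)
next
  assume "0 < y \<and> (\<forall>p. prime p \<longrightarrow> p dvd b \<longrightarrow> \<not> p dvd y \<longrightarrow> [y = a] (mod p))"
  with assms show "y \<in> kirch closure_of AP a b"
    by (intro in_closure_of_API) simp_all
qed

definition common_multiples :: "nat set \<Rightarrow> nat set" where
  "common_multiples P = {y. 0 < y \<and> (\<forall>p\<in>P. p dvd y)}"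

lemma common_multiples_antimono: "P \<subseteq> Q \<Longrightarrow> common_multiples Q \<subseteq> common_multiples P"
  by (auto simp: common_multiples_def)

lemma common_multiples_subset: "common_multiples P \<subseteq> {0<..}"
  by (auto simp: common_multiples_def)

lemma closure_of_open_supset_common_multiples:
  assumes "openin kirch U" "U \<noteq> {}"
  obtains P where "finite P" "\<forall>p\<in>P. prime p \<and> p \<noteq> 2" "common_multiples P \<subseteq> kirch closure_of U"
proof -
  obtain y where "y \<in> U" using assms(2) by blast
  then obtain d where d: "0 < d" "coprime y d" "squarefree d" "AP y d \<subseteq> U"
    using assms(1) openin_kirch_contains_AP by blast
  define P where "P = {p. prime p \<and> p \<noteq> 2 \<and> p dvd d}"
  have "finite P"
    unfolding P_def using finite_divisors_nat[OF d(1)] by (rule rev_finite_subset) auto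
  moreover have "common_multiples P \<subseteq> kirch closure_of U"
  proof
    fix z assume z: "z \<in> common_multiples P"
    \<comment> \<open>only the prime 2 can divide d without dividing z, and then y and z are both odd\<close>
    have "[z = y] (mod p)" if p: "prime p" "p dvd d" "\<not> p dvd z" for p
    proof -
      have "p = 2"
        using p z by (auto simp: P_def common_multiples_def)
      moreover have "odd y"
        using d(2) p(2) \<open>p = 2\<close> by (metis coprime_common_divisor dvd_refl not_prime_unit two_is_prime_nat)
      ultimately show ?thesis
        using p(3) by (simp add: cong_def odd_iff_mod_2_eq_one)
    qed
    then have "z \<in> kirch closure_of AP y d"
      using z by (simp add: in_closure_of_AP_iff[OF d(1,3)] common_multiples_def)
    then show "z \<in> kirch closure_of U"
      using closure_of_mono[OF d(4)] by blast
  qed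
  ultimately show thesis
    using that by (auto simp: P_def)
qed

lemma F_inf_supset_common_multiples:
  assumes "B \<in> F_inf"
  obtains P where "finite P" "\<forall>p\<in>P. prime p \<and> p \<noteq> 2" "common_multiples P \<subseteq> B"
proof -
  obtain n :: nat and U where U: "\<forall>i\<in>{1..n}. openin kirch (U i) \<and> U i \<noteq> {}"
    and B: "(\<Inter>i\<in>{1..n}. kirch closure_of (U i)) \<subseteq> B"
    using assms unfolding F_inf_def by blast
  have "\<forall>i\<in>{1..n}. \<exists>P. finite P \<and> (\<forall>p\<in>P. prime p \<and> p \<noteq> 2) \<and>
      common_multiples P \<subseteq> kirch closure_of (U i)"
  proof
    fix i assume "i \<in> {1..n}"
    with U have "openin kirch (U i)" "U i \<noteq> {}" by auto
    then obtain P where "finite P" "\<forall>p\<in>P. prime p \<and> p \<noteq> 2"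
      "common_multiples P \<subseteq> kirch closure_of (U i)"
      by (rule closure_of_open_supset_common_multiples)
    then show "\<exists>P. finite P \<and> (\<forall>p\<in>P. prime p \<and> p \<noteq> 2) \<and>
      common_multiples P \<subseteq> kirch closure_of (U i)" by blast
  qed
  from bchoice[OF this] obtain P where P: "\<forall>i\<in>{1..n}. finite (P i) \<and> (\<forall>p\<in>P i. prime p \<and> p \<noteq> 2) \<and>
      common_multiples (P i) \<subseteq> kirch closure_of (U i)"
    by blast
  have "common_multiples (\<Union>i\<in>{1..n}. P i) \<subseteq> (\<Inter>i\<in>{1..n}. kirch closure_of (U i))"
  proof (rule INT_greatest)
    fix i assume i: "i \<in> {1..n}"
    have "common_multiples (\<Union>i\<in>{1..n}. P i) \<subseteq> common_multiples (P i)"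
      using i by (intro common_multiples_antimono) blast
    also have "\<dots> \<subseteq> kirch closure_of (U i)"
      using P i by blast
    finally show "common_multiples (\<Union>i\<in>{1..n}. P i) \<subseteq> kirch closure_of (U i)" .
  qed
  also note B
  finally have "common_multiples (\<Union>i\<in>{1..n}. P i) \<subseteq> B" .
  moreover have "finite (\<Union>i\<in>{1..n}. P i)" "\<forall>p\<in>(\<Union>i\<in>{1..n}. P i). prime p \<and> p \<noteq> 2"
    using P by auto
  ultimately show thesis
    using that by blast
qed

lemma mem_A_E: "p \<in> A_E E \<longleftrightarrow> prime p \<and> (\<exists>k>0. \<forall>x\<in>E. p dvd x \<or> [x = k] (mod p))"
  unfolding A_E_def by (simp add: cong_int_iff)

lemma two_mem_A_E: "2 \<in> A_E E"
  unfolding mem_A_E by (intro conjI exI[of _ 1]) (auto simp: cong_def)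

lemma F_E_memI:
  assumes "B \<subseteq> {0<..}" "\<forall>x\<in>E. U x \<in> tau x" "(\<Inter>x\<in>E. kirch closure_of (U x)) \<subseteq> B"
  shows "B \<in> F_E E"
  unfolding F_E_def using assms by blast

lemma F_E_upward_closed:
  assumes "S \<in> F_E E" "S \<subseteq> B" "B \<subseteq> {0<..}"
  shows "B \<in> F_E E"
proof -
  from assms(1) obtain U where U: "\<forall>x\<in>E. U x \<in> tau x" "(\<Inter>x\<in>E. kirch closure_of (U x)) \<subseteq> S"
    unfolding F_E_def by blast
  from U(2) assms(2) have "(\<Inter>x\<in>E. kirch closure_of (U x)) \<subseteq> B"
    by (rule subset_trans)
  with assms(3) U(1) show ?thesis
    by (rule F_E_memI)
qed

lemma F_E_supset_closures_AP:
  assumes "B \<in> F_E E"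
  obtains d where "\<forall>x\<in>E. 0 < d x \<and> coprime x (d x) \<and> squarefree (d x)"
    "(\<Inter>x\<in>E. kirch closure_of AP x (d x)) \<subseteq> B"
proof -
  from assms obtain U where U: "\<forall>x\<in>E. openin kirch (U x) \<and> x \<in> U x"
    "(\<Inter>x\<in>E. kirch closure_of (U x)) \<subseteq> B"
    unfolding F_E_def tau_def by blast
  have "\<forall>x\<in>E. \<exists>d. 0 < d \<and> coprime x d \<and> squarefree d \<and> AP x d \<subseteq> U x"
  proof
    fix x assume "x \<in> E"
    with U(1) obtain d where "0 < d" "coprime x d" "squarefree d" "AP x d \<subseteq> U x"
      using openin_kirch_contains_AP by blast
    then show "\<exists>d. 0 < d \<and> coprime x d \<and> squarefree d \<and> AP x d \<subseteq> U x" by blast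
  qed
  from bchoice[OF this] obtain d
    where d: "\<forall>x\<in>E. 0 < d x \<and> coprime x (d x) \<and> squarefree (d x) \<and> AP x (d x) \<subseteq> U x"
    by blast
  have "(\<Inter>x\<in>E. kirch closure_of AP x (d x)) \<subseteq> (\<Inter>x\<in>E. kirch closure_of (U x))"
    using d closure_of_mono by (intro INF_superset_mono[OF subset_refl]) blast
  also note U(2)
  finally have "(\<Inter>x\<in>E. kirch closure_of AP x (d x)) \<subseteq> B" .
  moreover have "\<forall>x\<in>E. 0 < d x \<and> coprime x (d x) \<and> squarefree (d x)"
    using d by blast
  ultimately show thesis
    using that by blast
qed

lemma Inter_AP_primes_in_tau:
  assumes "0 < x" "finite Q" "\<forall>p\<in>Q. prime p \<and> \<not> p dvd x"
  shows "(\<Inter>p\<in>Q. AP x p) \<inter> topspace kirch \<in> tau x"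
proof -
  have "openin kirch ((\<Inter>p\<in>Q. AP x p) \<inter> topspace kirch)"
    using assms by (intro openin_INT openin_kirch_AP_prime) auto
  moreover have "x \<in> (\<Inter>p\<in>Q. AP x p) \<inter> topspace kirch"
    using assms(1) by (simp add: topspace_kirch mem_AP)
  ultimately show ?thesis
    by (simp add: tau_def)
qed

lemma common_multiples_in_F_E:
  assumes "A_E E = {2}" "E \<noteq> {}" "E \<subseteq> {0<..}"
    and "finite P" "\<forall>p\<in>P. prime p \<and> p \<noteq> 2"
  shows "common_multiples P \<in> F_E E"
proof -
  define V where "V x = (\<Inter>p\<in>{p\<in>P. \<not> p dvd x}. AP x p) \<inter> topspace kirch" for x
  have "V x \<in> tau x" if "x \<in> E" for x
    unfolding V_def using that assms(3-5) by (intro Inter_AP_primes_in_tau) auto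
  moreover have "(\<Inter>x\<in>E. kirch closure_of (V x)) \<subseteq> common_multiples P"
  proof
    fix y assume y: "y \<in> (\<Inter>x\<in>E. kirch closure_of (V x))"
    obtain x0 where "x0 \<in> E" using assms(2) by blast
    with y have "y \<in> topspace kirch"
      by (simp add: in_closure_of)
    then have "0 < y"
      by (simp add: topspace_kirch)
    moreover have "p dvd y" if "p \<in> P" for p
    proof (rule ccontr)
      assume "\<not> p dvd y"
      have p: "prime p" "p \<noteq> 2" using assms(5) that by auto
      then have "p \<notin> A_E E" using assms(1) by auto
      then obtain x where x: "x \<in> E" "\<not> p dvd x" "\<not> [x = y] (mod p)"
        using p(1) \<open>0 < y\<close> unfolding mem_A_E by blast
      have "V x \<subseteq> AP x p"
        using that x(2) by (auto simp: V_def)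
      then have "y \<in> kirch closure_of AP x p"
        using y x(1) closure_of_mono by blast
      then have "[y = x] (mod p)"
        by (rule cong_if_in_closure_of_AP[OF _ p(1) dvd_refl \<open>\<not> p dvd y\<close>])
      with x(3) show False
        by (simp add: cong_sym_eq)
    qed
    ultimately show "y \<in> common_multiples P"
      by (simp add: common_multiples_def)
  qed
  ultimately show ?thesis
    by (intro F_E_memI[OF common_multiples_subset]) auto
qed

lemma F_infI:
  assumes "B \<subseteq> {0<..}" "finite I" "I \<noteq> {}" "\<forall>i\<in>I. openin kirch (U i) \<and> U i \<noteq> {}"
    and "(\<Inter>i\<in>I. kirch closure_of (U i)) \<subseteq> B"
  shows "B \<in> F_inf"
proof -
  obtain h where h: "bij_betw h {1..card I} I"
    using ex_bij_betw_nat_finite_1[OF assms(2)] by blast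
  then have h_img: "h ` {1..card I} = I"
    by (simp add: bij_betw_def)
  have "(\<Inter>i\<in>{1..card I}. kirch closure_of (U (h i))) = (\<Inter>x\<in>h ` {1..card I}. kirch closure_of (U x))"
    by (simp add: image_image)
  also have "\<dots> \<subseteq> B"
    using assms(5) by (simp only: h_img)
  finally have "(\<Inter>i\<in>{1..card I}. kirch closure_of (U (h i))) \<subseteq> B" .
  moreover have "\<forall>i\<in>{1..card I}. openin kirch (U (h i)) \<and> U (h i) \<noteq> {}"
    using assms(4) h_img by blast
  moreover have "1 \<le> card I"
    using assms(2,3) by (simp add: Suc_le_eq card_gt_0_iff)
  ultimately show ?thesis
    unfolding F_inf_def using assms(1) by (intro CollectI conjI exI[of _ "card I"] exI[of _ "U \<circ> h"]) auto
qed

lemma F_E_subset_F_inf: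
  assumes "finite E" "E \<noteq> {}"
  shows "F_E E \<subseteq> F_inf"
proof
  fix B assume "B \<in> F_E E"
  then obtain U where "B \<subseteq> {0<..}" "\<forall>x\<in>E. openin kirch (U x) \<and> x \<in> U x"
    "(\<Inter>x\<in>E. kirch closure_of (U x)) \<subseteq> B"
    unfolding F_E_def tau_def by blast
  with assms show "B \<in> F_inf"
    by (intro F_infI[of B E U]) auto
qed

lemma F_inf_subset_F_E:
  assumes "A_E E = {2}" "E \<noteq> {}" "E \<subseteq> {0<..}"
  shows "F_inf \<subseteq> F_E E"
proof
  fix B assume B: "B \<in> F_inf"
  then have "B \<subseteq> {0<..}"
    unfolding F_inf_def by blast
  obtain P where "finite P" "\<forall>p\<in>P. prime p \<and> p \<noteq> 2" "common_multiples P \<subseteq> B"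
    using B by (rule F_inf_supset_common_multiples)
  with \<open>B \<subseteq> {0<..}\<close> show "B \<in> F_E E"
    by (intro F_E_upward_closed[OF common_multiples_in_F_E[OF assms]])
qed

lemma mem_A_E_unit_witness:
  assumes "p \<in> A_E E"
  obtains k where "\<not> p dvd k" "\<forall>x\<in>E. p dvd x \<or> [x = k] (mod p)"
proof -
  from assms obtain k where p: "prime p" and k: "\<forall>x\<in>E. p dvd x \<or> [x = k] (mod p)"
    unfolding mem_A_E by blast
  show thesis
  proof (cases "p dvd k")
    case True
    then have "\<forall>x\<in>E. p dvd x \<or> [x = 1] (mod p)"
      using k cong_dvd_iff by blast
    moreover have "\<not> p dvd 1"
      using p not_prime_unit by blast
    ultimately show thesis by (rule that[rotated])
  next
    case False
    then show thesis using k by (rule that)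
  qed
qed

lemma ex_cong_mod_prime_dvd_by_other_prime_factors:
  fixes p m k :: nat
  assumes "prime p" "0 < m"
  shows "\<exists>y. [y = k] (mod p) \<and> (\<forall>q. prime q \<longrightarrow> q \<noteq> p \<longrightarrow> q dvd m \<longrightarrow> q dvd y)"
proof -
  have "m \<noteq> 0" "\<not> is_unit p"
    using assms not_prime_unit by auto
  then obtain m' where m: "m = p ^ multiplicity p m * m'" "\<not> p dvd m'"
    by (rule multiplicity_decompose')
  have "coprime m' p"
    using prime_imp_coprime[OF assms(1) m(2)] by (rule coprime_commute[THEN iffD1])
  then obtain y where y: "[y = 0] (mod m')" "[y = k] (mod p)"
    using binary_chinese_remainder_nat by blast
  have "q dvd y" if q: "prime q" "q \<noteq> p" "q dvd m" for q
  proof -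
    have "\<not> q dvd p ^ multiplicity p m"
      using q(1,2) assms(1) by (metis prime_dvd_power primes_dvd_imp_eq)
    then have "q dvd m'"
      using q(1,3) m(1) by (metis prime_dvd_mult_iff)
    moreover have "m' dvd y"
      using y(1) by (simp add: cong_0_iff)
    ultimately show ?thesis by (rule dvd_trans)
  qed
  with y(2) show ?thesis by blast
qed

lemma common_multiples_prime_notin_F_E:
  assumes "finite E" "p \<in> A_E E"
  shows "common_multiples {p} \<notin> F_E E"
proof
  assume "common_multiples {p} \<in> F_E E"
  then obtain d where d: "\<forall>x\<in>E. 0 < d x \<and> coprime x (d x) \<and> squarefree (d x)"
    and d_sub: "(\<Inter>x\<in>E. kirch closure_of AP x (d x)) \<subseteq> common_multiples {p}"
    by (rule F_E_supset_closures_AP)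
  have p: "prime p"
    using assms(2) by (simp add: mem_A_E)
  obtain k where k: "\<not> p dvd k" "\<forall>x\<in>E. p dvd x \<or> [x = k] (mod p)"
    using assms(2) by (rule mem_A_E_unit_witness)
  have "0 < (\<Prod>x\<in>E. d x)"
    using d by (simp add: prod_pos)
  then obtain y where y: "[y = k] (mod p)"
    "\<And>q. prime q \<Longrightarrow> q \<noteq> p \<Longrightarrow> q dvd (\<Prod>x\<in>E. d x) \<Longrightarrow> q dvd y"
    using ex_cong_mod_prime_dvd_by_other_prime_factors[OF p] by blast
  have "\<not> p dvd y"
    using cong_dvd_iff[OF y(1)] k(1) by blast
  then have "0 < y"
    by (cases y) auto
  \<comment> \<open>the only prime of d x that may miss y is p, and p does not divide x\<close>
  have "y \<in> kirch closure_of AP x (d x)" if x: "x \<in> E" for x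
  proof -
    have "[y = x] (mod q)" if q: "prime q" "q dvd d x" "\<not> q dvd y" for q
    proof -
      have "q dvd (\<Prod>x\<in>E. d x)"
        using q(2) dvd_prodI[OF assms(1) x, of d] by (rule dvd_trans)
      then have "q = p"
        using y(2) q(1,3) by blast
      then have "\<not> p dvd x"
        using d x q(1,2) by (metis coprime_common_divisor not_prime_unit)
      then have "[x = k] (mod p)"
        using k(2) x by blast
      with y(1) \<open>q = p\<close> show ?thesis
        by (metis cong_sym cong_trans)
    qed
    with \<open>0 < y\<close> d x show ?thesis
      by (simp add: in_closure_of_AP_iff)
  qed
  with d_sub have "y \<in> common_multiples {p}"
    by blast
  with \<open>\<not> p dvd y\<close> show False
    by (simp add: common_multiples_def)
qed

lemma common_multiples_odd_prime_in_F_inf: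
  assumes "prime p" "p \<noteq> 2"
  shows "common_multiples {p} \<in> F_inf"
proof (rule F_infI[of _ "{1, 2}" "\<lambda>i. AP i p"])
  have "2 < p"
    using prime_ge_2_nat[OF assms(1)] assms(2) by linarith
  show "\<forall>i\<in>{1, 2}. openin kirch (AP i p) \<and> AP i p \<noteq> {}"
  proof
    fix i :: nat assume i: "i \<in> {1, 2}"
    then have "0 < i" "\<not> p dvd i"
      using \<open>2 < p\<close> by (auto dest: dvd_imp_le)
    then have "openin kirch (AP i p)"
      using assms(1) by (intro openin_kirch_AP_prime)
    moreover have "i \<in> AP i p"
      by (simp add: mem_AP)
    ultimately show "openin kirch (AP i p) \<and> AP i p \<noteq> {}"
      by blast
  qed
  show "(\<Inter>i\<in>{1, 2}. kirch closure_of AP i p) \<subseteq> common_multiples {p}"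
  proof
    fix y assume "y \<in> (\<Inter>i\<in>{1, 2}. kirch closure_of AP i p)"
    then have y: "y \<in> kirch closure_of AP 1 p" "y \<in> kirch closure_of AP 2 p"
      by auto
    then have "0 < y"
      by (simp add: in_closure_of topspace_kirch)
    moreover have "p dvd y"
    proof (rule ccontr)
      assume "\<not> p dvd y"
      then have "[y = 1] (mod p)" "[y = 2] (mod p)"
        using cong_if_in_closure_of_AP[OF _ assms(1) dvd_refl] y by blast+
      then have "[1 = 2] (mod p)"
        by (metis cong_sym cong_trans)
      with \<open>2 < p\<close> show False
        by (simp add: cong_def)
    qed
    ultimately show "y \<in> common_multiples {p}"
      by (simp add: common_multiples_def)
  qed
qed (auto simp: common_multiples_subset)

lemma F_E_eq_F_inf_iff:
  assumes "finite E" "E \<noteq> {}" "E \<subseteq> {0<..}"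
  shows "F_E E = F_inf \<longleftrightarrow> A_E E = {2}"
proof
  assume eq: "F_E E = F_inf"
  have "p = 2" if "p \<in> A_E E" for p
  proof (rule ccontr)
    assume "p \<noteq> 2"
    moreover have "prime p"
      using that by (simp add: mem_A_E)
    ultimately have "common_multiples {p} \<in> F_E E"
      using eq common_multiples_odd_prime_in_F_inf by simp
    with common_multiples_prime_notin_F_E[OF assms(1) that] show False
      by contradiction
  qed
  with two_mem_A_E show "A_E E = {2}"
    by blast
next
  assume "A_E E = {2}"
  with assms show "F_E E = F_inf"
    using F_E_subset_F_inf F_inf_subset_F_E by (intro equalityI) simp_all
qed

lemma mem_A_E_doubleton:
  assumes "0 < x" "0 < y"
  shows "p \<in> A_E {x, y} \<longleftrightarrow> prime p \<and> (p dvd x \<or> p dvd y \<or> [x = y] (mod p))"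
proof
  assume "p \<in> A_E {x, y}"
  then obtain k where "prime p" "p dvd x \<or> [x = k] (mod p)" "p dvd y \<or> [y = k] (mod p)"
    unfolding mem_A_E by blast
  then show "prime p \<and> (p dvd x \<or> p dvd y \<or> [x = y] (mod p))"
    by (meson cong_sym cong_trans)
next
  assume p: "prime p \<and> (p dvd x \<or> p dvd y \<or> [x = y] (mod p))"
  show "p \<in> A_E {x, y}"
    unfolding mem_A_E
  proof (cases "p dvd x")
    case True
    then show "prime p \<and> (\<exists>k>0. \<forall>z\<in>{x, y}. p dvd z \<or> [z = k] (mod p))"
      using p assms by (intro conjI exI[of _ y]) auto
  next
    case False
    then have "p dvd y \<or> [y = x] (mod p)"
      using p cong_sym by blast
    then show "prime p \<and> (\<exists>k>0. \<forall>z\<in>{x, y}. p dvd z \<or> [z = k] (mod p))"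
      using p assms by (intro conjI exI[of _ x]) auto
  qed
qed

lemma power_of_two_if_prime_factors_two:
  fixes x :: nat
  assumes "0 < x" "\<And>p. prime p \<Longrightarrow> p dvd x \<Longrightarrow> p = 2"
  shows "\<exists>k. x = 2 ^ k"
proof -
  have "x \<noteq> 0" "\<not> is_unit (2::nat)"
    using assms(1) by auto
  then obtain r where r: "x = 2 ^ multiplicity 2 x * r" "\<not> 2 dvd r"
    by (rule multiplicity_decompose')
  have "r = 1"
  proof (rule ccontr)
    assume "r \<noteq> 1"
    then obtain q where "prime q" "q dvd r"
      using prime_factor_nat by blast
    moreover from this have "q dvd 2 ^ multiplicity 2 x * r"
      by simp
    then have "q dvd x"
      by (simp only: r(1)[symmetric])
    ultimately show False
      using assms(2) r(2) by blast
  qed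
  from r(1) have "x = 2 ^ multiplicity 2 x"
    unfolding \<open>r = 1\<close> by (simp only: mult_1_right)
  then show ?thesis ..
qed

lemma odd_prime_not_dvd_power_of_two:
  fixes p :: nat
  assumes "prime p" "p \<noteq> 2"
  shows "\<not> p dvd 2 ^ k"
  using assms by (metis prime_dvd_power primes_dvd_imp_eq two_is_prime_nat)

lemma ex_odd_prime_cong_powers_of_two:
  fixes a b :: nat
  assumes "a < b" "b \<noteq> a + 1"
  shows "\<exists>q. prime q \<and> q \<noteq> 2 \<and> [2 ^ a = (2::nat) ^ b] (mod q)"
proof -
  define c where "c = b - a"
  have "2 \<le> c" using assms unfolding c_def by linarith
  then have "(2::nat) ^ 2 \<le> 2 ^ c"
    by (rule power_increasing) simp
  then have "(2::nat) ^ c - 1 \<noteq> 1"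
    by simp
  then obtain q :: nat where q: "prime q" "q dvd 2 ^ c - 1"
    using prime_factor_nat by blast
  have "odd ((2::nat) ^ c - 1)"
    using \<open>2 \<le> c\<close> by simp
  then have "q \<noteq> 2"
    using q(2) by auto
  have "(2::nat) ^ b - 2 ^ a = 2 ^ a * (2 ^ c - 1)"
    using assms(1) by (simp add: c_def diff_mult_distrib2 power_add[symmetric])
  then have "q dvd 2 ^ b - 2 ^ a"
    using q(2) by simp
  then have "[2 ^ b = (2::nat) ^ a] (mod q)"
    using assms(1) by (simp add: cong_altdef_nat)
  with q(1) \<open>q \<noteq> 2\<close> show ?thesis
    using cong_sym by blast
qed

lemma A_E_consecutive_powers_of_two: "A_E {2 ^ n, 2 ^ (n + 1)} = {2}"
proof -
  have "p = 2" if "p \<in> A_E {2 ^ n, 2 ^ (n + 1)}" for p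
  proof (rule ccontr)
    assume "p \<noteq> 2"
    have p: "prime p" "p dvd 2 ^ n \<or> p dvd 2 ^ (n + 1) \<or> [2 ^ n = 2 ^ (n + 1)] (mod p)"
      using that mem_A_E_doubleton[of "2 ^ n" "2 ^ (n + 1)"] by auto
    have not_dvd: "\<not> p dvd 2 ^ k" for k
      using odd_prime_not_dvd_power_of_two[OF p(1) \<open>p \<noteq> 2\<close>] .
    have "[2 ^ (n + 1) = (2::nat) ^ n] (mod p)"
      using p(2) not_dvd by (metis cong_sym)
    then have "p dvd 2 ^ (n + 1) - 2 ^ n"
      by (simp add: cong_altdef_nat)
    with not_dvd[of n] show False
      by simp
  qed
  with two_mem_A_E show ?thesis
    by blast
qed

lemma consecutive_powers_of_two_if_A_E_doubleton:
  fixes x y :: nat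
  assumes "0 < x" "0 < y" "x \<noteq> y" and A: "A_E {x, y} = {2}"
  shows "\<exists>n. {x, y} = {2 ^ n, 2 ^ (n + 1)}"
proof -
  have only_two: "p = 2" if "prime p" "p dvd x \<or> p dvd y \<or> [x = y] (mod p)" for p
    using mem_A_E_doubleton[OF assms(1,2), of p] that unfolding A by blast
  have "\<exists>a. x = 2 ^ a"
    by (rule power_of_two_if_prime_factors_two[OF assms(1)]) (auto intro: only_two)
  then obtain a where a: "x = 2 ^ a" ..
  have "\<exists>b. y = 2 ^ b"
    by (rule power_of_two_if_prime_factors_two[OF assms(2)]) (auto intro: only_two)
  then obtain b where b: "y = 2 ^ b" ..
  have "a \<noteq> b"
    using a b assms(3) by auto
  have "b = a + 1 \<or> a = b + 1"
  proof (rule ccontr)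
    assume neither: "\<not> (b = a + 1 \<or> a = b + 1)"
    obtain q where q: "prime q" "q \<noteq> 2" "[x = y] (mod q)"
    proof (cases "a < b")
      case True
      with neither obtain q where "prime q" "q \<noteq> 2" "[2 ^ a = (2::nat) ^ b] (mod q)"
        using ex_odd_prime_cong_powers_of_two by blast
      with a b show thesis
        using that by blast
    next
      case False
      with \<open>a \<noteq> b\<close> neither obtain q where "prime q" "q \<noteq> 2" "[2 ^ b = (2::nat) ^ a] (mod q)"
        using ex_odd_prime_cong_powers_of_two by (metis linorder_neqE_nat)
      with a b show thesis
        using that cong_sym by blast
    qed
    then have "q = 2"
      by (intro only_two) simp_all
    with q(2) show False ..
  qed
  then show ?thesis
  proof
    assume "b = a + 1"
    with a b show ?thesis by blast
  next
    assume "a = b + 1"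
    with a b have "{x, y} = {2 ^ b, 2 ^ (b + 1)}"
      by (simp only: insert_commute)
    then show ?thesis ..
  qed
qed

lemma A_E_doubleton_eq_2_iff:
  fixes x y :: nat
  assumes "0 < x" "0 < y" "x \<noteq> y"
  shows "A_E {x, y} = {2} \<longleftrightarrow> (\<exists>n. {x, y} = {2 ^ n, 2 ^ (n + 1)})"
  using consecutive_powers_of_two_if_A_E_doubleton[OF assms] A_E_consecutive_powers_of_two by auto

theorem lemma3p8:
  fixes E :: "nat set"
  assumes "finite E" and "E \<noteq> {}" and "E \<subseteq> {0<..}"
  shows "(F_E E = F_inf \<longleftrightarrow> A_E E = {2})
     \<and> (card E = 2 \<longrightarrow>
          ((F_E E = F_inf \<longleftrightarrow> (\<exists>n::nat. E = {2 ^ n, 2 ^ (n + 1)}))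
           \<and> (A_E E = {2} \<longleftrightarrow> (\<exists>n::nat. E = {2 ^ n, 2 ^ (n + 1)}))))"
proof -
  have "F_E E = F_inf \<longleftrightarrow> A_E E = {2}"
    using assms by (rule F_E_eq_F_inf_iff)
  moreover have "A_E E = {2} \<longleftrightarrow> (\<exists>n. E = {2 ^ n, 2 ^ (n + 1)})" if "card E = 2"
  proof -
    from that obtain x y where E: "E = {x, y}" "x \<noteq> y"
      by (auto simp: card_2_iff)
    with assms(3) have "0 < x" "0 < y"
      by auto
    with E show ?thesis
      using A_E_doubleton_eq_2_iff by simp
  qed
  ultimately show ?thesis
    by blast
qed

end
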